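(* If the probabilistic normed space $(\mathbb{R},\nu,\tau,\tau^* )$ (on the real line) is a topological vector space with respect to its strong topology, then it is strongly complete, i.e. every strongly Cauchy sequence in $\mathbb{R}$ strongly converges to a point of $\mathbb{R}$.
   Context: $\Delta^{+}$ is the set of functions $F:[-\infty,+\infty]\to[0,1]$ that are left-continuous on $\mathbb{R}$, nondecreasing, with $F(0)=0$ and $F(+\infty)=1$, ordered pointwise; $\varepsilon_0$ is the d.f. equal to $0$ for $x\le0$ and $1$ for $x>0$. A triangle function is a map $\tau:\Delta^+\times\Delta^+\to\Delta^+$ that is associative, commutative, nondecreasing in each argument, with unit $\varepsilon_0$. A PN space is a quadruple $(V,\nu,\tau,\tau^* )$ with $V$ a real vector space, $\tau\le\tau^*$ continuous triangle functions, and $\nu:V\to\Delta^+$ such that for all $p,q\in V$: (N1) $\nu_p=\varepsilon_0$ iff $p=\theta$; (N2) $\nu_{-p}=\nu_p$; (N3) $\nu_{p+q}\ge\tau(\nu_p,\nu_q)$; (N4) $\nu_p\le\tau^*(\nu_{\lambda p},\nu_{(1-\lambda)p})$ for all $\lambda\in[0,1]$. The strong topology is generated by the neighborhoods $N_p(\lambda)=\{q\in V:\nu_{p-q}(\lambda)>1-\lambda\}$, $\lambda>0$. A sequence $(p_n)$ strongly converges to $p$ if for every $\lambda>0$ there is $N$ with $p_n\in N_p(\lambda)$ for $n\ge N$; it is strongly Cauchy if for every $\lambda>0$ there is $N$ with $\nu_{p_n-p_m}(\lambda)>1-\lambda$ for all $m,n>N$. *)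

theory Defs
  imports "HOL-Analysis.Analysis"
begin

definition Delta_plus :: "(ereal \<Rightarrow> real) set" where
  "Delta_plus = {F. (\<forall>x. 0 \<le> F x \<and> F x \<le> 1)
      \<and> (\<forall>x::real. ((\<lambda>y. F (ereal y)) \<longlongrightarrow> F (ereal x)) (at_left x))
      \<and> mono F \<and> F 0 = 0 \<and> F PInfty = 1}"

definition eps0 :: "ereal \<Rightarrow> real" where
  "eps0 x = (if x \<le> 0 then 0 else 1)"

text \<open>Weak convergence of distance distribution functions (convergence at
  every real point of continuity of the limit); this is convergence in the
  modified Levy metric on Delta_plus.\<close>

definition weak_conv :: "(nat \<Rightarrow> ereal \<Rightarrow> real) \<Rightarrow> (ereal \<Rightarrow> real) \<Rightarrow> bool" where
  "weak_conv Fs F \<longleftrightarrow>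
     (\<forall>x::real. isCont (\<lambda>y. F (ereal y)) x \<longrightarrow> (\<lambda>n. Fs n (ereal x)) \<longlonglongrightarrow> F (ereal x))"

definition triangle_function ::
  "((ereal \<Rightarrow> real) \<Rightarrow> (ereal \<Rightarrow> real) \<Rightarrow> (ereal \<Rightarrow> real)) \<Rightarrow> bool" where
  "triangle_function T \<longleftrightarrow>
     (\<forall>F\<in>Delta_plus. \<forall>G\<in>Delta_plus. T F G \<in> Delta_plus)
   \<and> (\<forall>F\<in>Delta_plus. \<forall>G\<in>Delta_plus. \<forall>H\<in>Delta_plus. T (T F G) H = T F (T G H))
   \<and> (\<forall>F\<in>Delta_plus. \<forall>G\<in>Delta_plus. T F G = T G F)
   \<and> (\<forall>F\<in>Delta_plus. \<forall>F'\<in>Delta_plus. \<forall>G\<in>Delta_plus.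
        F \<le> F' \<longrightarrow> T F G \<le> T F' G)
   \<and> (\<forall>F\<in>Delta_plus. T F eps0 = F)"

definition continuous_triangle_function ::
  "((ereal \<Rightarrow> real) \<Rightarrow> (ereal \<Rightarrow> real) \<Rightarrow> (ereal \<Rightarrow> real)) \<Rightarrow> bool" where
  "continuous_triangle_function T \<longleftrightarrow> triangle_function T \<and>
     (\<forall>Fs Gs F G. (\<forall>n. Fs n \<in> Delta_plus \<and> Gs n \<in> Delta_plus) \<and> F \<in> Delta_plus \<and> G \<in> Delta_plus
        \<and> weak_conv Fs F \<and> weak_conv Gs G \<longrightarrow> weak_conv (\<lambda>n. T (Fs n) (Gs n)) (T F G))"

definition PN_space_real ::
  "(real \<Rightarrow> ereal \<Rightarrow> real) \<Rightarrow> ((ereal \<Rightarrow> real) \<Rightarrow> (ereal \<Rightarrow> real) \<Rightarrow> (ereal \<Rightarrow> real))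
     \<Rightarrow> ((ereal \<Rightarrow> real) \<Rightarrow> (ereal \<Rightarrow> real) \<Rightarrow> (ereal \<Rightarrow> real)) \<Rightarrow> bool" where
  "PN_space_real \<nu> T Ts \<longleftrightarrow>
     continuous_triangle_function T \<and> continuous_triangle_function Ts
   \<and> (\<forall>F\<in>Delta_plus. \<forall>G\<in>Delta_plus. T F G \<le> Ts F G)
   \<and> (\<forall>p. \<nu> p \<in> Delta_plus)
   \<and> (\<forall>p. \<nu> p = eps0 \<longleftrightarrow> p = 0)
   \<and> (\<forall>p. \<nu> (- p) = \<nu> p)
   \<and> (\<forall>p q. \<nu> (p + q) \<ge> T (\<nu> p) (\<nu> q))
   \<and> (\<forall>p. \<forall>l\<in>{0..1}. \<nu> p \<le> Ts (\<nu> (l * p)) (\<nu> ((1 - l) * p)))"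

definition strong_nbhd :: "(real \<Rightarrow> ereal \<Rightarrow> real) \<Rightarrow> real \<Rightarrow> real \<Rightarrow> real set" where
  "strong_nbhd \<nu> p l = {q. \<nu> (p - q) (ereal l) > 1 - l}"

definition strong_open :: "(real \<Rightarrow> ereal \<Rightarrow> real) \<Rightarrow> real set \<Rightarrow> bool" where
  "strong_open \<nu> U \<longleftrightarrow> (\<forall>p\<in>U. \<exists>l>0. strong_nbhd \<nu> p l \<subseteq> U)"

text \<open>The strong topology: the topology whose open sets are those containing a
  strong neighbourhood of each of their points (for a PN space the family of such
  sets is already a topology, so generating is harmless).\<close>

definition strong_topology :: "(real \<Rightarrow> ereal \<Rightarrow> real) \<Rightarrow> real topology" where
  "strong_topology \<nu> = topology_generated_by {U. strong_open \<nu> U}"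

definition strong_TVS :: "(real \<Rightarrow> ereal \<Rightarrow> real) \<Rightarrow> bool" where
  "strong_TVS \<nu> \<longleftrightarrow>
     continuous_map (prod_topology (strong_topology \<nu>) (strong_topology \<nu>)) (strong_topology \<nu>)
        (\<lambda>(x, y). x + y)
   \<and> continuous_map (prod_topology euclideanreal (strong_topology \<nu>)) (strong_topology \<nu>)
        (\<lambda>(a, x). a * x)"

definition strongly_Cauchy :: "(real \<Rightarrow> ereal \<Rightarrow> real) \<Rightarrow> (nat \<Rightarrow> real) \<Rightarrow> bool" where
  "strongly_Cauchy \<nu> s \<longleftrightarrow>
     (\<forall>l>0. \<exists>N. \<forall>m n. m > N \<and> n > N \<longrightarrow> \<nu> (s n - s m) (ereal l) > 1 - l)"

definition strongly_converges :: "(real \<Rightarrow> ereal \<Rightarrow> real) \<Rightarrow> (nat \<Rightarrow> real) \<Rightarrow> real \<Rightarrow> bool" where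
  "strongly_converges \<nu> s p \<longleftrightarrow>
     (\<forall>l>0. \<exists>N. \<forall>n\<ge>N. s n \<in> strong_nbhd \<nu> p l)"

end

theory Submission
  imports Defs
begin

text \<open>When the strong topology makes \<open>\<real>\<close> a topological vector space it agrees with the
  Euclidean topology near \<open>0\<close>. Continuity of \<open>a \<mapsto> a * 1\<close> puts an interval around \<open>0\<close>
  into every strong neighbourhood of \<open>0\<close>, and joint continuity of \<open>(a, x) \<mapsto> a * x\<close> keeps
  small strong neighbourhoods of \<open>0\<close> inside any given interval. A strongly Cauchy sequence is
  therefore Cauchy, has a real limit, and converges strongly to it. Continuity of \<open>\<tau>\<close> at
  \<open>(\<epsilon>\<^sub>0, \<epsilon>\<^sub>0)\<close> is what makes each \<open>N\<^sub>p(\<lambda>)\<close> contain a strong-open set around \<open>p\<close>,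
  so that these sets really are neighbourhoods of the strong topology.\<close>

lemma eps0_in_Delta_plus: "eps0 \<in> Delta_plus"
proof -
  have "((\<lambda>y. eps0 (ereal y)) \<longlongrightarrow> eps0 (ereal x)) (at_left x)" for x :: real
  proof -
    have "eventually (\<lambda>y. eps0 (ereal y) = eps0 (ereal x)) (at_left x)"
      unfolding eventually_at_left_field
      by (intro exI[of _ "if x \<le> 0 then x - 1 else 0"]) (auto simp: eps0_def zero_ereal_def)
    then show ?thesis by (rule tendsto_eventually)
  qed
  moreover have "mono eps0"
    unfolding mono_def eps0_def by auto
  ultimately show ?thesis
    unfolding Delta_plus_def by (auto simp: eps0_def)
qed

lemma Delta_plus_nonpos:
  assumes "F \<in> Delta_plus" and "x \<le> 0"
  shows "F x = 0"
proof -
  have "mono F" "F 0 = 0" "0 \<le> F x" using assms(1) by (auto simp: Delta_plus_def)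
  then show ?thesis using monoD[of F x 0] assms(2) by simp
qed

lemma Delta_plus_eq_eps0:
  assumes F: "F \<in> Delta_plus" and near: "\<And>l. l > 0 \<Longrightarrow> F (ereal l) > 1 - l"
  shows "F = eps0"
proof
  fix x
  have le1: "F x \<le> 1" and mono: "mono F" and top: "F PInfty = 1"
    using F by (auto simp: Delta_plus_def)
  show "F x = eps0 x"
  proof (cases x)
    case (real r)
    show ?thesis
    proof (cases "r \<le> 0")
      case True
      then show ?thesis using Delta_plus_nonpos[OF F] real by (simp add: eps0_def zero_ereal_def)
    next
      case False
      have "F x \<ge> 1"
      proof (rule ccontr)
        assume "\<not> F x \<ge> 1"
        define l where "l = min r (1 - F x)"
        have "l > 0" using False \<open>\<not> F x \<ge> 1\<close> by (simp add: l_def)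
        moreover have "F (ereal l) \<le> F x" using mono real by (simp add: monoD l_def)
        ultimately show False using near[of l] by (simp add: l_def)
      qed
      then show ?thesis using le1 False real by (simp add: eps0_def zero_ereal_def)
    qed
  next
    case PInf
    then show ?thesis using top by (simp add: eps0_def)
  next
    case MInf
    then show ?thesis using Delta_plus_nonpos[OF F] by (simp add: eps0_def)
  qed
qed

lemma weak_conv_eps0I:
  assumes F: "\<And>n. Fs n \<in> Delta_plus"
    and near: "\<And>n. Fs n (ereal (r n)) > 1 - r n"
    and r: "r \<longlonglongrightarrow> 0"
  shows "weak_conv Fs eps0"
  unfolding weak_conv_def
proof (intro allI impI)
  fix x :: real
  show "(\<lambda>n. Fs n (ereal x)) \<longlonglongrightarrow> eps0 (ereal x)"
  proof (cases "x \<le> 0")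
    case True
    then show ?thesis using Delta_plus_nonpos[OF F] by (simp add: eps0_def zero_ereal_def)
  next
    case False
    have "eventually (\<lambda>n. r n < x) sequentially"
      using order_tendstoD(2)[OF r] False by simp
    then have lower: "eventually (\<lambda>n. 1 - r n \<le> Fs n (ereal x)) sequentially"
    proof (rule eventually_mono)
      fix n assume "r n < x"
      then have "Fs n (ereal (r n)) \<le> Fs n (ereal x)"
        using F[of n] by (simp add: Delta_plus_def monoD)
      then show "1 - r n \<le> Fs n (ereal x)" using near[of n] by simp
    qed
    have upper: "eventually (\<lambda>n. Fs n (ereal x) \<le> 1) sequentially"
      using F by (simp add: Delta_plus_def)
    have "(\<lambda>n. 1 - r n) \<longlonglongrightarrow> 1"
      using tendsto_diff[OF tendsto_const r, of 1] by simp
    then have "(\<lambda>n. Fs n (ereal x)) \<longlonglongrightarrow> 1"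
      by (rule tendsto_sandwich[OF lower upper _ tendsto_const])
    then show ?thesis using False by (simp add: eps0_def zero_ereal_def)
  qed
qed

lemma continuous_triangle_function_near_eps0:
  assumes T: "continuous_triangle_function T" and l: "l > 0"
  shows "\<exists>m>0. \<forall>F\<in>Delta_plus. \<forall>G\<in>Delta_plus.
           F (ereal m) > 1 - m \<and> G (ereal m) > 1 - m \<longrightarrow> T F G (ereal l) > 1 - l"
proof (rule ccontr)
  define r where "r n = inverse (real (Suc n))" for n
  assume "\<not> ?thesis"
  moreover have "r n > 0" for n by (simp add: r_def)
  ultimately have "\<exists>F G. F \<in> Delta_plus \<and> G \<in> Delta_plus \<and>
      F (ereal (r n)) > 1 - r n \<and> G (ereal (r n)) > 1 - r n \<and> T F G (ereal l) \<le> 1 - l" for n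
    by (meson not_le)
  then obtain Fs Gs where FG: "\<And>n. Fs n \<in> Delta_plus" "\<And>n. Gs n \<in> Delta_plus"
      "\<And>n. Fs n (ereal (r n)) > 1 - r n" "\<And>n. Gs n (ereal (r n)) > 1 - r n"
      "\<And>n. T (Fs n) (Gs n) (ereal l) \<le> 1 - l"
    by metis
  have r0: "r \<longlonglongrightarrow> 0" unfolding r_def by (rule LIMSEQ_inverse_real_of_nat)
  have "T eps0 eps0 = eps0"
    using T eps0_in_Delta_plus by (simp add: continuous_triangle_function_def triangle_function_def)
  moreover have "weak_conv (\<lambda>n. T (Fs n) (Gs n)) (T eps0 eps0)"
    using T FG(1,2) eps0_in_Delta_plus weak_conv_eps0I[OF FG(1,3) r0] weak_conv_eps0I[OF FG(2,4) r0]
    unfolding continuous_triangle_function_def by blast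
  moreover have "isCont (\<lambda>y. eps0 (ereal y)) l"
  proof -
    have "eventually (\<lambda>y. y > 0) (nhds l)" using l by (rule order_tendstoD(1)[OF filterlim_ident])
    then have "eventually (\<lambda>y. eps0 (ereal y) = 1) (nhds l)"
      by (rule eventually_mono) (simp add: eps0_def zero_ereal_def)
    from isCont_cong[OF this] show ?thesis by simp
  qed
  ultimately have "(\<lambda>n. T (Fs n) (Gs n) (ereal l)) \<longlonglongrightarrow> eps0 (ereal l)"
    unfolding weak_conv_def by simp
  then have "eps0 (ereal l) \<le> 1 - l"
    using FG(5) by (intro LIMSEQ_le_const2) auto
  with l show False by (simp add: eps0_def zero_ereal_def)
qed

lemma strong_nbhd_mono:
  assumes "\<forall>p. \<nu> p \<in> Delta_plus" and "a \<le> b"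
  shows "strong_nbhd \<nu> p a \<subseteq> strong_nbhd \<nu> p b"
proof
  fix q assume "q \<in> strong_nbhd \<nu> p a"
  moreover have "\<nu> (p - q) (ereal a) \<le> \<nu> (p - q) (ereal b)"
    using assms by (simp add: Delta_plus_def monoD)
  ultimately show "q \<in> strong_nbhd \<nu> p b" using assms(2) by (simp add: strong_nbhd_def)
qed

lemma center_in_strong_nbhd:
  assumes "\<nu> 0 = eps0" and "l > 0"
  shows "p \<in> strong_nbhd \<nu> p l"
  using assms by (simp add: strong_nbhd_def eps0_def zero_ereal_def)

lemma strong_nbhd_zero_iff:
  assumes "\<forall>p. \<nu> (- p) = \<nu> p"
  shows "x \<in> strong_nbhd \<nu> 0 l \<longleftrightarrow> \<nu> x (ereal l) > 1 - l"
  using assms by (simp add: strong_nbhd_def)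

lemma openin_strong_topology:
  assumes D: "\<forall>p. \<nu> p \<in> Delta_plus"
  shows "openin (strong_topology \<nu>) U \<longleftrightarrow> strong_open \<nu> U"
proof
  assume "openin (strong_topology \<nu>) U"
  then have "generate_topology_on {U. strong_open \<nu> U} U"
    by (simp add: strong_topology_def openin_topology_generated_by_iff)
  then show "strong_open \<nu> U"
  proof (induction rule: generate_topology_on.induct)
    case Empty
    then show ?case by (simp add: strong_open_def)
  next
    case (Int a b)
    show ?case
      unfolding strong_open_def
    proof
      fix p assume "p \<in> a \<inter> b"
      then obtain la lb where "la > 0" "strong_nbhd \<nu> p la \<subseteq> a" "lb > 0" "strong_nbhd \<nu> p lb \<subseteq> b"
        using Int.IH by (meson IntD1 IntD2 strong_open_def)
      moreover have "strong_nbhd \<nu> p (min la lb) \<subseteq> strong_nbhd \<nu> p la \<inter> strong_nbhd \<nu> p lb"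
        using strong_nbhd_mono[OF D] by simp
      ultimately show "\<exists>l>0. strong_nbhd \<nu> p l \<subseteq> a \<inter> b"
        by (intro exI[of _ "min la lb"]) auto
    qed
  next
    case (UN K)
    then show ?case unfolding strong_open_def by blast
  next
    case (Basis s)
    then show ?case by simp
  qed
next
  assume "strong_open \<nu> U"
  then show "openin (strong_topology \<nu>) U"
    unfolding strong_topology_def by (simp add: topology_generated_by_Basis)
qed

lemma topspace_strong_topology: "topspace (strong_topology \<nu>) = UNIV"
proof -
  have "strong_open \<nu> UNIV" unfolding strong_open_def by (auto intro: exI[of _ 1])
  then show ?thesis unfolding strong_topology_def by auto
qed

lemma strong_nbhd_triangle:
  assumes PN: "PN_space_real \<nu> T Ts" and k: "k > 0"
  obtains m where "m > 0"
    and "\<And>q r t. r \<in> strong_nbhd \<nu> q m \<Longrightarrow> t \<in> strong_nbhd \<nu> r m \<Longrightarrow> t \<in> strong_nbhd \<nu> q k"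
proof -
  have T: "continuous_triangle_function T" and D: "\<forall>p. \<nu> p \<in> Delta_plus"
    and N3: "\<forall>p q. \<nu> (p + q) \<ge> T (\<nu> p) (\<nu> q)"
    using PN unfolding PN_space_real_def by auto
  obtain m where "m > 0" and m: "\<forall>F\<in>Delta_plus. \<forall>G\<in>Delta_plus.
      F (ereal m) > 1 - m \<and> G (ereal m) > 1 - m \<longrightarrow> T F G (ereal k) > 1 - k"
    using continuous_triangle_function_near_eps0[OF T k] by blast
  have "t \<in> strong_nbhd \<nu> q k" if "r \<in> strong_nbhd \<nu> q m" "t \<in> strong_nbhd \<nu> r m" for q r t
  proof -
    have "T (\<nu> (q - r)) (\<nu> (r - t)) (ereal k) > 1 - k"
      using m D that by (simp add: strong_nbhd_def)
    moreover have "T (\<nu> (q - r)) (\<nu> (r - t)) \<le> \<nu> ((q - r) + (r - t))"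
      using N3 by blast
    ultimately show ?thesis by (simp add: strong_nbhd_def le_fun_def less_le_trans)
  qed
  with \<open>m > 0\<close> show thesis by (rule that)
qed

lemma strong_nbhd_contains_strong_open:
  assumes PN: "PN_space_real \<nu> T Ts" and l: "l > 0"
  obtains U where "strong_open \<nu> U" and "p \<in> U" and "U \<subseteq> strong_nbhd \<nu> p l"
proof
  define U where "U = {q. \<exists>k>0. strong_nbhd \<nu> q k \<subseteq> strong_nbhd \<nu> p l}"
  show "strong_open \<nu> U"
    unfolding strong_open_def
  proof
    fix q assume "q \<in> U"
    then obtain k where "k > 0" and k: "strong_nbhd \<nu> q k \<subseteq> strong_nbhd \<nu> p l"
      unfolding U_def by blast
    obtain m where "m > 0" and m: "\<And>r t. r \<in> strong_nbhd \<nu> q m \<Longrightarrow> t \<in> strong_nbhd \<nu> r m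
        \<Longrightarrow> t \<in> strong_nbhd \<nu> q k"
      using strong_nbhd_triangle[OF PN \<open>k > 0\<close>] by metis
    have "strong_nbhd \<nu> q m \<subseteq> U"
      unfolding U_def using \<open>m > 0\<close> m k by blast
    with \<open>m > 0\<close> show "\<exists>m>0. strong_nbhd \<nu> q m \<subseteq> U" by blast
  qed
  show "p \<in> U" unfolding U_def using l by blast
  have "\<nu> 0 = eps0" using PN by (simp add: PN_space_real_def)
  then show "U \<subseteq> strong_nbhd \<nu> p l"
    unfolding U_def using center_in_strong_nbhd by blast
qed

lemma strong_TVS_continuous_map_id:
  assumes "strong_TVS \<nu>"
  shows "continuous_map euclideanreal (strong_topology \<nu>) (\<lambda>a. a)"
proof -
  have "continuous_map euclideanreal (prod_topology euclideanreal (strong_topology \<nu>)) (\<lambda>a. (a, 1::real))"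
    by (simp add: continuous_map_paired topspace_strong_topology)
  moreover have "continuous_map (prod_topology euclideanreal (strong_topology \<nu>)) (strong_topology \<nu>)
      (\<lambda>(a, x). a * x)"
    using assms by (simp add: strong_TVS_def)
  ultimately have "continuous_map euclideanreal (strong_topology \<nu>) ((\<lambda>(a, x). a * x) \<circ> (\<lambda>a. (a, 1::real)))"
    by (rule continuous_map_compose)
  then show ?thesis by (simp add: o_def)
qed

lemma strong_nbhd_zero_contains_interval:
  assumes PN: "PN_space_real \<nu> T Ts" and TVS: "strong_TVS \<nu>" and l: "l > 0"
  obtains d where "d > 0" and "\<And>x. \<bar>x\<bar> < d \<Longrightarrow> \<nu> x (ereal l) > 1 - l"
proof -
  have D: "\<forall>p. \<nu> p \<in> Delta_plus" and N2: "\<forall>p. \<nu> (- p) = \<nu> p"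
    using PN by (auto simp: PN_space_real_def)
  obtain V where V: "strong_open \<nu> V" "0 \<in> V" "V \<subseteq> strong_nbhd \<nu> 0 l"
    using strong_nbhd_contains_strong_open[OF PN l] by blast
  have "openin euclideanreal {a \<in> topspace euclideanreal. a \<in> V}"
    using openin_continuous_map_preimage[OF strong_TVS_continuous_map_id[OF TVS]] V(1)
    by (simp add: openin_strong_topology[OF D])
  then have "open V" by simp
  then obtain d where "d > 0" "ball 0 d \<subseteq> V" using V(2) open_contains_ball by blast
  moreover have "\<nu> x (ereal l) > 1 - l" if "x \<in> V" for x
    using that V(3) strong_nbhd_zero_iff[OF N2] by blast
  ultimately show thesis by (intro that[of d]) (auto simp: dist_real_def)
qed

text \<open>If arbitrarily small strong neighbourhoods of \<open>0\<close> contained points \<open>x\<close> with \<open>\<bar>x\<bar> \<ge> e\<close>,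
  then \<open>1 = (1/x) * x\<close> with \<open>1/x \<in> {-1/e..1/e}\<close> would lie in every strong neighbourhood of
  \<open>0\<close>: joint continuity of scalar multiplication on the compact set \<open>{-1/e..1/e} \<times> {0}\<close>
  is uniform in the scalar by the tube lemma.\<close>

lemma strong_nbhd_zero_within_interval:
  assumes PN: "PN_space_real \<nu> T Ts" and TVS: "strong_TVS \<nu>" and e: "e > 0"
  obtains l where "l > 0" and "\<And>x. \<nu> x (ereal l) > 1 - l \<Longrightarrow> \<bar>x\<bar> < e"
proof -
  have D: "\<forall>p. \<nu> p \<in> Delta_plus" and N2: "\<forall>p. \<nu> (- p) = \<nu> p"
    and N1: "\<nu> 1 \<noteq> eps0"
    using PN by (auto simp: PN_space_real_def)
  obtain l1 where "l1 > 0" and l1: "\<nu> 1 (ereal l1) \<le> 1 - l1"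
    using Delta_plus_eq_eps0[of "\<nu> 1"] D N1 by (meson not_le)
  obtain V where V: "strong_open \<nu> V" "0 \<in> V" "V \<subseteq> strong_nbhd \<nu> 0 l1"
    using strong_nbhd_contains_strong_open[OF PN \<open>l1 > 0\<close>] by blast
  have "1 \<notin> V" using V(3) l1 strong_nbhd_zero_iff[OF N2] by force
  define W where "W = {z \<in> topspace (prod_topology euclideanreal (strong_topology \<nu>)).
      (\<lambda>(a, x). a * x) z \<in> V}"
  have "openin (prod_topology euclideanreal (strong_topology \<nu>)) W"
    unfolding W_def using TVS V(1)
    by (intro openin_continuous_map_preimage) (auto simp: strong_TVS_def openin_strong_topology[OF D])
  moreover have "compactin euclideanreal {-1/e..1/e}" by (simp add: compactin_euclidean_iff)
  moreover have "{-1/e..1/e} \<times> {0} \<subseteq> W" using V(2) by (auto simp: W_def topspace_strong_topology)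
  ultimately obtain U V' where "openin (strong_topology \<nu>) V'" "0 \<in> V'"
      and U: "{-1/e..1/e} \<subseteq> U" and UV': "U \<times> V' \<subseteq> W"
    using tube_lemma_left[of euclideanreal "strong_topology \<nu>" W "{-1/e..1/e}" 0]
    by (auto simp: topspace_strong_topology)
  then obtain l where "l > 0" and l: "strong_nbhd \<nu> 0 l \<subseteq> V'"
    using openin_strong_topology[OF D] by (auto simp: strong_open_def)
  have "\<bar>x\<bar> < e" if x: "\<nu> x (ereal l) > 1 - l" for x
  proof (rule ccontr)
    assume "\<not> \<bar>x\<bar> < e"
    then have "x \<noteq> 0" and "1/x \<in> {-1/e..1/e}"
      using e by (auto simp: divide_simps abs_le_iff split: if_splits)
    moreover have "x \<in> V'" using x l strong_nbhd_zero_iff[OF N2] by blast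
    ultimately have "(1/x, x) \<in> W" using U UV' by blast
    then have "1 \<in> V" using \<open>x \<noteq> 0\<close> by (simp add: W_def)
    with \<open>1 \<notin> V\<close> show False by simp
  qed
  with \<open>l > 0\<close> show thesis by (rule that)
qed

lemma strongly_Cauchy_imp_Cauchy:
  assumes PN: "PN_space_real \<nu> T Ts" and TVS: "strong_TVS \<nu>" and s: "strongly_Cauchy \<nu> s"
  shows "Cauchy s"
  unfolding Cauchy_def
proof (intro allI impI)
  fix e :: real assume "e > 0"
  then obtain l where "l > 0" and l: "\<And>x. \<nu> x (ereal l) > 1 - l \<Longrightarrow> \<bar>x\<bar> < e"
    using strong_nbhd_zero_within_interval[OF PN TVS] by blast
  then obtain N where N: "\<forall>m n. m > N \<and> n > N \<longrightarrow> \<nu> (s n - s m) (ereal l) > 1 - l"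
    using s unfolding strongly_Cauchy_def by blast
  have "dist (s m) (s n) < e" if "m > N" "n > N" for m n
    using N l that by (simp add: dist_real_def)
  then show "\<exists>M. \<forall>m\<ge>M. \<forall>n\<ge>M. dist (s m) (s n) < e"
    by (intro exI[of _ "Suc N"]) auto
qed

lemma LIMSEQ_imp_strongly_converges:
  assumes PN: "PN_space_real \<nu> T Ts" and TVS: "strong_TVS \<nu>" and s: "s \<longlonglongrightarrow> p"
  shows "strongly_converges \<nu> s p"
  unfolding strongly_converges_def
proof (intro allI impI)
  fix l :: real assume "l > 0"
  then obtain d where "d > 0" and d: "\<And>x. \<bar>x\<bar> < d \<Longrightarrow> \<nu> x (ereal l) > 1 - l"
    using strong_nbhd_zero_contains_interval[OF PN TVS] by blast
  then obtain N where "\<forall>n\<ge>N. \<bar>p - s n\<bar> < d"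
    using LIMSEQ_D[OF s] by (metis abs_minus_commute real_norm_def)
  then show "\<exists>N. \<forall>n\<ge>N. s n \<in> strong_nbhd \<nu> p l"
    using d by (auto simp: strong_nbhd_def)
qed

theorem theorem14:
  fixes \<nu> :: "real \<Rightarrow> ereal \<Rightarrow> real"
    and T Ts :: "(ereal \<Rightarrow> real) \<Rightarrow> (ereal \<Rightarrow> real) \<Rightarrow> (ereal \<Rightarrow> real)"
  assumes "PN_space_real \<nu> T Ts"
    and "strong_TVS \<nu>"
  shows "\<forall>s. strongly_Cauchy \<nu> s \<longrightarrow> (\<exists>p. strongly_converges \<nu> s p)"
proof (intro allI impI)
  fix s assume "strongly_Cauchy \<nu> s"
  then have "Cauchy s" by (rule strongly_Cauchy_imp_Cauchy[OF assms])
  then obtain p where "s \<longlonglongrightarrow> p" using Cauchy_convergent_iff convergent_def by blast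
  then show "\<exists>p. strongly_converges \<nu> s p"
    using LIMSEQ_imp_strongly_converges[OF assms] by blast
qed

end
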